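(* Let $k$ be a field of characteristic $0$, $A$ a commutative $k$-algebra with an ideal $I$, $I^2=0$, such that $\underline{A}:=A/I$ is smooth over $k$, and let $\tau:\underline{A}\to A$ be a $k$-algebra splitting of $A\to\underline{A}$; regard $A$ as an $\underline{A}$-algebra via $\tau$. Let $B\twoheadrightarrow A$ be a surjection of $\underline{A}$-algebras with $B$ smooth over $\underline{A}$, let $\hat{B}$ be the completion of $B$ along the kernel of this surjection, $\hat{J}$ the kernel of the induced surjection $\hat{B}\to A$, $\hat{I}$ the inverse image of $I$ in $\hat{B}$, and $\hat{\tau}:\underline{A}\to\hat{B}$ the structure map. For $a\in A^\flat$, let $\underline{a}$ be its image in $\underline{A}$, $\hat{\underline{a}}:=\hat\tau(\underline{a})$, and $\tilde{a}\in\hat{B}$ any lift of $a$. Then the class of $$-\frac{1}{2}\,\frac{(\tilde{a}-\hat{\underline{a}})^3}{\hat{\underline{a}}^2(\hat{\underline{a}}-1)^2}$$ in $\hat{J}/\hat{J}^2$ is independent of the choice of the lift $\tilde a$, and it lies in the kernel of the map $\hat{J}/\hat{J}^2\to\Omega^1_{\hat{B}}/\hat{J}\Omega^1_{\hat{B}}$ induced by the (absolute) differential $d$.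
   Context: $A^\flat$ denotes the set of units $a\in A$ such that $1-a$ is also a unit. K\"ahler differentials are relative to $\mathbb{Q}$. *)

theory Defs
  imports "HOL-Algebra.Algebra"
begin

definition alg_finite_type :: "'r ring \<Rightarrow> 'a ring \<Rightarrow> ('r \<Rightarrow> 'a) \<Rightarrow> bool" where
  "alg_finite_type R A h \<longleftrightarrow>
     (\<exists>S. finite S \<and> S \<subseteq> carrier A \<and> carrier A = generate_ring A (h ` carrier R \<union> S))"

text \<open>Test algebras C are taken with carrier in the
  type ('a + 'r) list, which is large enough (every lifting problem reduces to one on a
  subring of cardinality at most |A| + |R| + aleph0).\<close>
definition formally_smooth :: "'r ring \<Rightarrow> 'a ring \<Rightarrow> ('r \<Rightarrow> 'a) \<Rightarrow> bool" where
  "formally_smooth R A h \<longleftrightarrow>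
     (\<forall>(C :: ('a + 'r) list ring) g N u.
        cring C \<and> g \<in> ring_hom R C \<and> ideal N C \<and>
        (\<forall>x\<in>N. \<forall>y\<in>N. x \<otimes>\<^bsub>C\<^esub> y = \<zero>\<^bsub>C\<^esub>) \<and>
        u \<in> ring_hom A (C Quot N) \<and>
        (\<forall>r\<in>carrier R. u (h r) = N +>\<^bsub>C\<^esub> g r)
        \<longrightarrow> (\<exists>v\<in>ring_hom A C. (\<forall>r\<in>carrier R. v (h r) = g r) \<and>
                                 (\<forall>x\<in>carrier A. N +>\<^bsub>C\<^esub> v x = u x)))"

text \<open>Smooth = finite type + formally smooth.  (All base rings occurring below are
  Noetherian, so finite type = finite presentation there.)\<close>
definition smooth_alg :: "'r ring \<Rightarrow> 'a ring \<Rightarrow> ('r \<Rightarrow> 'a) \<Rightarrow> bool" where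
  "smooth_alg R A h \<longleftrightarrow> alg_finite_type R A h \<and> formally_smooth R A h"

definition flat_units :: "'a ring \<Rightarrow> 'a set" where
  "flat_units A = {a \<in> Units A. \<one>\<^bsub>A\<^esub> \<ominus>\<^bsub>A\<^esub> a \<in> Units A}"

text \<open>ipow R K n is the ideal power K^(n+1).\<close>
fun ipow :: "'b ring \<Rightarrow> 'b set \<Rightarrow> nat \<Rightarrow> 'b set" where
  "ipow R K 0 = K"
| "ipow R K (Suc n) = K \<cdot>\<^bsub>R\<^esub> ipow R K n"

text \<open>The completion lim B/K^(n+1) as compatible sequences of cosets.\<close>
definition completion :: "'b ring \<Rightarrow> 'b set \<Rightarrow> (nat \<Rightarrow> 'b set) ring" where
  "completion B K = \<lparr>
     carrier = {f. (\<forall>n. f n \<in> carrier (B Quot ipow B K n)) \<and> (\<forall>n. f (Suc n) \<subseteq> f n)},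
     monoid.mult = (\<lambda>f g n. f n \<otimes>\<^bsub>B Quot ipow B K n\<^esub> g n),
     monoid.one = (\<lambda>n. \<one>\<^bsub>B Quot ipow B K n\<^esub>),
     ring.zero = (\<lambda>n. \<zero>\<^bsub>B Quot ipow B K n\<^esub>),
     ring.add = (\<lambda>f g n. f n \<oplus>\<^bsub>B Quot ipow B K n\<^esub> g n) \<rparr>"

definition compl_map :: "'b ring \<Rightarrow> 'b set \<Rightarrow> 'b \<Rightarrow> (nat \<Rightarrow> 'b set)" where
  "compl_map B K b = (\<lambda>n. ipow B K n +>\<^bsub>B\<^esub> b)"

definition compl_proj :: "('b \<Rightarrow> 'a) \<Rightarrow> (nat \<Rightarrow> 'b set) \<Rightarrow> 'a" where
  "compl_proj pr f = the_elem (pr ` f 0)"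

definition free_mod :: "'c ring \<Rightarrow> ('c \<Rightarrow> 'c) set" where
  "free_mod R = {\<phi>. finite {b. \<phi> b \<noteq> \<zero>\<^bsub>R\<^esub>} \<and> (\<forall>b. \<phi> b \<noteq> \<zero>\<^bsub>R\<^esub> \<longrightarrow> b \<in> carrier R)
                    \<and> (\<forall>b. \<phi> b \<in> carrier R)}"

definition fm_basis :: "'c ring \<Rightarrow> 'c \<Rightarrow> ('c \<Rightarrow> 'c)" where
  "fm_basis R b = (\<lambda>c. if c = b then \<one>\<^bsub>R\<^esub> else \<zero>\<^bsub>R\<^esub>)"

definition fm_add :: "'c ring \<Rightarrow> ('c \<Rightarrow> 'c) \<Rightarrow> ('c \<Rightarrow> 'c) \<Rightarrow> ('c \<Rightarrow> 'c)" where
  "fm_add R \<phi> \<psi> = (\<lambda>c. \<phi> c \<oplus>\<^bsub>R\<^esub> \<psi> c)"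

definition fm_smult :: "'c ring \<Rightarrow> 'c \<Rightarrow> ('c \<Rightarrow> 'c) \<Rightarrow> ('c \<Rightarrow> 'c)" where
  "fm_smult R r \<phi> = (\<lambda>c. r \<otimes>\<^bsub>R\<^esub> \<phi> c)"

definition fm_neg :: "'c ring \<Rightarrow> ('c \<Rightarrow> 'c) \<Rightarrow> ('c \<Rightarrow> 'c)" where
  "fm_neg R \<phi> = (\<lambda>c. \<ominus>\<^bsub>R\<^esub> \<phi> c)"

inductive_set fm_span :: "'c ring \<Rightarrow> ('c \<Rightarrow> 'c) set \<Rightarrow> ('c \<Rightarrow> 'c) set"
  for R S where
    zero: "(\<lambda>_. \<zero>\<^bsub>R\<^esub>) \<in> fm_span R S"
  | gen: "\<phi> \<in> S \<Longrightarrow> \<phi> \<in> fm_span R S"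
  | add: "\<phi> \<in> fm_span R S \<Longrightarrow> \<psi> \<in> fm_span R S \<Longrightarrow> fm_add R \<phi> \<psi> \<in> fm_span R S"
  | smult: "r \<in> carrier R \<Longrightarrow> \<phi> \<in> fm_span R S \<Longrightarrow> fm_smult R r \<phi> \<in> fm_span R S"

text \<open>Relations defining Omega^1_R = free_mod R / span(kaehler_rels R), with d b = class of
  fm_basis R b.  (For a Q-algebra R, additive derivations are automatically Q-linear.)\<close>
definition kaehler_rels :: "'c ring \<Rightarrow> ('c \<Rightarrow> 'c) set" where
  "kaehler_rels R =
     {fm_add R (fm_basis R (a \<oplus>\<^bsub>R\<^esub> b)) (fm_neg R (fm_add R (fm_basis R a) (fm_basis R b)))
       | a b. a \<in> carrier R \<and> b \<in> carrier R}
   \<union> {fm_add R (fm_basis R (a \<otimes>\<^bsub>R\<^esub> b))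
        (fm_neg R (fm_add R (fm_smult R a (fm_basis R b)) (fm_smult R b (fm_basis R a))))
       | a b. a \<in> carrier R \<and> b \<in> carrier R}"

text \<open>d x maps to zero in Omega^1_R / J Omega^1_R = free_mod R / (span(rels) + J free_mod R).\<close>
definition d_zero_mod :: "'c ring \<Rightarrow> 'c set \<Rightarrow> 'c \<Rightarrow> bool" where
  "d_zero_mod R J x \<longleftrightarrow>
     fm_basis R x \<in> fm_span R (kaehler_rels R \<union> {fm_smult R j \<phi> | j \<phi>. j \<in> J \<and> \<phi> \<in> free_mod R})"

end

(*
  Write y = t - ah for a lift t of a. Its image in A is a - tau(a mod I), which lies in I, so
  the product of any two such elements lies in Jh, as I^2 = 0. Hence
  y1^3 - y2^3 = (y1 - y2)(y1^2 + y1 y2 + y2^2) lies in Jh^2, and d(y^3) = y^2 dy + y d(y^2)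
  = 3 y^2 dy lies in Jh Omega. The coefficient -1/(2 ah^2 (ah - 1)^2) is a genuine element of
  the completion because 2 and a^2 (a - 1)^2 are units of A (characteristic 0, and a in A^flat).
*)
theory Submission
  imports Defs
begin

lemma ipow_ideal: "ring B \<Longrightarrow> ideal K B \<Longrightarrow> ideal (ipow B K n) B"
  by (induction n) (simp_all add: ring.ideal_prod_is_ideal)

lemma ipow_Suc_subset: "ring B \<Longrightarrow> ideal K B \<Longrightarrow> ipow B K (Suc n) \<subseteq> ipow B K n"
  using ring.ideal_prod_inter ipow_ideal by fastforce

lemma a_r_coset_mono: "I' \<subseteq> I \<Longrightarrow> I' +>\<^bsub>R\<^esub> x \<subseteq> I +>\<^bsub>R\<^esub> x"
  unfolding a_r_coset_def r_coset_def by auto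

lemma set_add_mono: "U' \<subseteq> U \<Longrightarrow> V' \<subseteq> V \<Longrightarrow> set_add R U' V' \<subseteq> set_add R U V"
  unfolding set_add_def by (rule mono_set_mult)

lemma rcoset_mult_mono:
  "I' \<subseteq> I \<Longrightarrow> U' \<subseteq> U \<Longrightarrow> V' \<subseteq> V \<Longrightarrow> rcoset_mult R I' U' V' \<subseteq> rcoset_mult R I U V"
  unfolding rcoset_mult_def by (meson UN_mono a_r_coset_mono)

lemma completion_apply:
  "(f \<otimes>\<^bsub>completion B K\<^esub> g) n = f n \<otimes>\<^bsub>B Quot ipow B K n\<^esub> g n"
  "(f \<oplus>\<^bsub>completion B K\<^esub> g) n = f n \<oplus>\<^bsub>B Quot ipow B K n\<^esub> g n"
  "\<one>\<^bsub>completion B K\<^esub> n = \<one>\<^bsub>B Quot ipow B K n\<^esub>"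
  "\<zero>\<^bsub>completion B K\<^esub> n = \<zero>\<^bsub>B Quot ipow B K n\<^esub>"
  by (simp_all add: completion_def)

context
  fixes B :: "'b ring" and K :: "'b set"
  assumes cring_B: "cring B" and ideal_K: "ideal K B"
begin

private lemma ring_B: "ring B"
  using cring_B by (rule cring.axioms(1))

private lemma cring_Quot_ipow: "cring (B Quot ipow B K n)"
  by (rule ideal.quotient_is_cring[OF ipow_ideal[OF ring_B ideal_K] cring_B])

private lemma rcos_hom_ipow: "(+>\<^bsub>B\<^esub>) (ipow B K n) \<in> ring_hom B (B Quot ipow B K n)"
  by (rule ideal.rcos_ring_hom[OF ipow_ideal[OF ring_B ideal_K]])

private lemma ipow_Suc_subset': "ipow B K (Suc n) \<subseteq> ipow B K n"
  by (rule ipow_Suc_subset[OF ring_B ideal_K])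

lemma compl_map_closed: "b \<in> carrier B \<Longrightarrow> compl_map B K b \<in> carrier (completion B K)"
  unfolding completion_def compl_map_def
  using ring_hom_closed[OF rcos_hom_ipow] a_r_coset_mono[OF ipow_Suc_subset'] by (simp del: ipow.simps) blast

text \<open>Closure under the operations is monotonicity of the coset operations; additive inverses
  are obtained by multiplying with the image of \<open>-1\<close>, which avoids computing inverses of cosets.\<close>
lemma cring_completion: "cring (completion B K)"
proof -
  interpret B: cring B by (rule cring_B)
  interpret Q: cring "B Quot ipow B K n" for n by (rule cring_Quot_ipow)
  let ?C = "completion B K"
  have carrier_iff: "f \<in> carrier ?C \<longleftrightarrow> (\<forall>n. f n \<in> carrier (B Quot ipow B K n)) \<and> (\<forall>n. f (Suc n) \<subseteq> f n)" for f
    by (simp add: completion_def)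
  have add_closed: "f \<oplus>\<^bsub>?C\<^esub> g \<in> carrier ?C" if "f \<in> carrier ?C" "g \<in> carrier ?C" for f g
    using that unfolding carrier_iff
    by (simp add: completion_def del: ipow.simps) (simp add: FactRing_def set_add_mono del: ipow.simps)
  have mult_closed: "f \<otimes>\<^bsub>?C\<^esub> g \<in> carrier ?C" if "f \<in> carrier ?C" "g \<in> carrier ?C" for f g
    using that unfolding carrier_iff
    by (simp add: completion_def del: ipow.simps) (simp add: FactRing_def rcoset_mult_mono[OF ipow_Suc_subset'] del: ipow.simps)
  have comp: "f n \<in> carrier (B Quot ipow B K n)" if "f \<in> carrier ?C" for f n
    using that carrier_iff by blast
  have zero_closed: "\<zero>\<^bsub>?C\<^esub> \<in> carrier ?C"
    unfolding carrier_iff by (simp add: completion_def del: ipow.simps) (simp add: FactRing_def ipow_Suc_subset' del: ipow.simps)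
  have one_eq: "\<one>\<^bsub>?C\<^esub> = compl_map B K \<one>\<^bsub>B\<^esub>"
    by (simp add: completion_def compl_map_def FactRing_def)
  have neg_one: "compl_map B K (\<ominus>\<^bsub>B\<^esub> \<one>\<^bsub>B\<^esub>) n = \<ominus>\<^bsub>B Quot ipow B K n\<^esub> \<one>\<^bsub>B Quot ipow B K n\<^esub>" for n
  proof -
    interpret h: ring_hom_ring B "B Quot ipow B K n" "(+>\<^bsub>B\<^esub>) (ipow B K n)"
      by (rule ideal.rcos_ring_hom_ring[OF ipow_ideal[OF ring_B ideal_K]])
    show ?thesis unfolding compl_map_def by simp
  qed
  show ?thesis
  proof (rule cringI)
    show "abelian_group ?C"
    proof (rule abelian_groupI)
      fix f assume f: "f \<in> carrier ?C"
      let ?g = "compl_map B K (\<ominus>\<^bsub>B\<^esub> \<one>\<^bsub>B\<^esub>) \<otimes>\<^bsub>?C\<^esub> f"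
      have "?g \<oplus>\<^bsub>?C\<^esub> f = \<zero>\<^bsub>?C\<^esub>"
        by (rule ext) (simp add: completion_apply neg_one comp[OF f] Q.l_minus Q.l_neg)
      moreover have "?g \<in> carrier ?C"
        by (rule mult_closed[OF compl_map_closed f]) simp
      ultimately show "\<exists>g\<in>carrier ?C. g \<oplus>\<^bsub>?C\<^esub> f = \<zero>\<^bsub>?C\<^esub>" by blast
    next
      fix f g h assume "f \<in> carrier ?C" "g \<in> carrier ?C" "h \<in> carrier ?C"
      then show "f \<oplus>\<^bsub>?C\<^esub> g \<oplus>\<^bsub>?C\<^esub> h = f \<oplus>\<^bsub>?C\<^esub> (g \<oplus>\<^bsub>?C\<^esub> h)"
        by (intro ext) (simp add: completion_apply comp Q.a_assoc)
    next
      fix f g assume "f \<in> carrier ?C" "g \<in> carrier ?C"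
      then show "f \<oplus>\<^bsub>?C\<^esub> g = g \<oplus>\<^bsub>?C\<^esub> f"
        by (intro ext) (simp add: completion_apply comp Q.a_comm)
    next
      fix f assume "f \<in> carrier ?C"
      then show "\<zero>\<^bsub>?C\<^esub> \<oplus>\<^bsub>?C\<^esub> f = f"
        by (intro ext) (simp add: completion_apply comp)
    qed (simp_all add: zero_closed add_closed)
  next
    show "comm_monoid ?C"
    proof (rule comm_monoidI)
      fix f g h assume "f \<in> carrier ?C" "g \<in> carrier ?C" "h \<in> carrier ?C"
      then show "f \<otimes>\<^bsub>?C\<^esub> g \<otimes>\<^bsub>?C\<^esub> h = f \<otimes>\<^bsub>?C\<^esub> (g \<otimes>\<^bsub>?C\<^esub> h)"
        by (intro ext) (simp add: completion_apply comp Q.m_assoc)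
    next
      fix f g assume "f \<in> carrier ?C" "g \<in> carrier ?C"
      then show "f \<otimes>\<^bsub>?C\<^esub> g = g \<otimes>\<^bsub>?C\<^esub> f"
        by (intro ext) (simp add: completion_apply comp Q.m_comm)
    next
      fix f assume "f \<in> carrier ?C"
      then show "\<one>\<^bsub>?C\<^esub> \<otimes>\<^bsub>?C\<^esub> f = f"
        by (intro ext) (simp add: completion_apply comp)
    next
      show "\<one>\<^bsub>?C\<^esub> \<in> carrier ?C"
        unfolding one_eq by (rule compl_map_closed) simp
    qed (rule mult_closed)
  next
    fix f g h assume "f \<in> carrier ?C" "g \<in> carrier ?C" "h \<in> carrier ?C"
    then show "(f \<oplus>\<^bsub>?C\<^esub> g) \<otimes>\<^bsub>?C\<^esub> h = f \<otimes>\<^bsub>?C\<^esub> h \<oplus>\<^bsub>?C\<^esub> g \<otimes>\<^bsub>?C\<^esub> h"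
      by (intro ext) (simp add: completion_apply comp Q.l_distr)
  qed
qed

lemma compl_map_hom: "compl_map B K \<in> ring_hom B (completion B K)"
proof (rule ring_hom_memI)
  show "compl_map B K \<one>\<^bsub>B\<^esub> = \<one>\<^bsub>completion B K\<^esub>"
    by (simp add: completion_def compl_map_def FactRing_def)
qed (auto intro!: ext simp: compl_map_closed[unfolded compl_map_def] completion_apply compl_map_def ring_hom_mult[OF rcos_hom_ipow] ring_hom_add[OF rcos_hom_ipow])

lemma completion_component_hom: "(\<lambda>f. f n) \<in> ring_hom (completion B K) (B Quot ipow B K n)"
  by (rule ring_hom_memI) (simp_all add: completion_apply, simp add: completion_def)

lemma compl_proj_hom:
  assumes "ring A" and "pr \<in> ring_hom B A" and "K = a_kernel B A pr"
  shows "compl_proj pr \<in> ring_hom (completion B K) A"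
proof -
  interpret pr: ring_hom_ring B A pr
    by (rule ring_hom_ringI2[OF ring_B assms(1,2)])
  have "compl_proj pr = (\<lambda>U. the_elem (pr ` U)) \<circ> (\<lambda>f. f 0)"
    by (simp add: compl_proj_def fun_eq_iff)
  moreover have "(\<lambda>f. f 0) \<in> ring_hom (completion B K) (B Quot a_kernel B A pr)"
    using completion_component_hom[of 0] assms(3) by simp
  ultimately show ?thesis
    using ring_hom_trans pr.the_elem_hom by metis
qed

lemma compl_proj_compl_map:
  assumes "ring A" and "pr \<in> ring_hom B A" and "K = a_kernel B A pr" and "b \<in> carrier B"
  shows "compl_proj pr (compl_map B K b) = pr b"
proof -
  interpret pr: ring_hom_ring B A pr
    by (rule ring_hom_ringI2[OF ring_B assms(1,2)])
  show ?thesis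
    using assms(3,4) by (simp add: compl_proj_def compl_map_def)
qed

end

lemma completion_along_kernel:
  assumes "cring B" and "ring A" and "pr \<in> ring_hom B A" and "K = a_kernel B A pr"
  shows "cring (completion B K)" and "compl_map B K \<in> ring_hom B (completion B K)"
    and "compl_proj pr \<in> ring_hom (completion B K) A"
    and "b \<in> carrier B \<Longrightarrow> compl_proj pr (compl_map B K b) = pr b"
proof -
  have K: "ideal K B"
    unfolding assms(4) using ring_hom_ring.kernel_is_ideal[OF ring_hom_ringI2[OF cring.axioms(1)[OF assms(1)] assms(2,3)]] .
  show "cring (completion B K)" by (rule cring_completion[OF assms(1) K])
  show "compl_map B K \<in> ring_hom B (completion B K)" by (rule compl_map_hom[OF assms(1) K])
  show "compl_proj pr \<in> ring_hom (completion B K) A" by (rule compl_proj_hom[OF assms(1) K assms(2-4)])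
  show "b \<in> carrier B \<Longrightarrow> compl_proj pr (compl_map B K b) = pr b"
    by (rule compl_proj_compl_map[OF assms(1) K assms(2-4)])
qed

definition kaehler_mod_rels :: "'c ring \<Rightarrow> 'c set \<Rightarrow> ('c \<Rightarrow> 'c) set" where
  "kaehler_mod_rels R J =
     fm_span R (kaehler_rels R \<union> {fm_smult R j \<phi> | j \<phi>. j \<in> J \<and> \<phi> \<in> free_mod R})"

lemma d_zero_mod_iff: "d_zero_mod R J x \<longleftrightarrow> fm_basis R x \<in> kaehler_mod_rels R J"
  by (simp add: d_zero_mod_def kaehler_mod_rels_def)

context
  fixes R :: "'c ring" and J :: "'c set"
  assumes cring_R: "cring R"
begin

interpretation R: cring R by (rule cring_R)

lemma fm_basis_closed: "fm_basis R b c \<in> carrier R"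
  by (simp add: fm_basis_def)

lemma fm_basis_free_mod: "b \<in> carrier R \<Longrightarrow> fm_basis R b \<in> free_mod R"
proof -
  have "{c. fm_basis R b c \<noteq> \<zero>\<^bsub>R\<^esub>} \<subseteq> {b}" by (auto simp: fm_basis_def)
  then show "b \<in> carrier R \<Longrightarrow> ?thesis"
    by (auto simp: free_mod_def fm_basis_closed intro: finite_subset)
qed

lemma smult_fm_basis_mem_kaehler_mod_rels:
  "j \<in> J \<Longrightarrow> b \<in> carrier R \<Longrightarrow> fm_smult R j (fm_basis R b) \<in> kaehler_mod_rels R J"
  unfolding kaehler_mod_rels_def by (rule fm_span.gen) (blast intro: fm_basis_free_mod)

lemma smult_fm_basis_mult_mem_kaehler_mod_rels:
  assumes r: "r \<in> carrier R" and p: "p \<in> carrier R" and q: "q \<in> carrier R"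
    and "fm_smult R (r \<otimes>\<^bsub>R\<^esub> p) (fm_basis R q) \<in> kaehler_mod_rels R J"
    and "fm_smult R (r \<otimes>\<^bsub>R\<^esub> q) (fm_basis R p) \<in> kaehler_mod_rels R J"
  shows "fm_smult R r (fm_basis R (p \<otimes>\<^bsub>R\<^esub> q)) \<in> kaehler_mod_rels R J"
proof -
  define leibniz where "leibniz = fm_add R (fm_basis R (p \<otimes>\<^bsub>R\<^esub> q))
    (fm_neg R (fm_add R (fm_smult R p (fm_basis R q)) (fm_smult R q (fm_basis R p))))"
  have "leibniz \<in> kaehler_mod_rels R J"
    unfolding kaehler_mod_rels_def kaehler_rels_def leibniz_def using p q by (intro fm_span.gen) blast
  with assms(4,5) have "fm_add R (fm_smult R r leibniz)
      (fm_add R (fm_smult R (r \<otimes>\<^bsub>R\<^esub> p) (fm_basis R q)) (fm_smult R (r \<otimes>\<^bsub>R\<^esub> q) (fm_basis R p)))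
      \<in> kaehler_mod_rels R J"
    unfolding kaehler_mod_rels_def by (blast intro: fm_span.add fm_span.smult[OF r])
  moreover have "fm_add R (fm_smult R r leibniz)
      (fm_add R (fm_smult R (r \<otimes>\<^bsub>R\<^esub> p) (fm_basis R q)) (fm_smult R (r \<otimes>\<^bsub>R\<^esub> q) (fm_basis R p)))
      = fm_smult R r (fm_basis R (p \<otimes>\<^bsub>R\<^esub> q))" (is "?lhs = ?rhs")
  proof
    fix c
    have "fm_basis R (p \<otimes>\<^bsub>R\<^esub> q) c \<in> carrier R" "fm_basis R q c \<in> carrier R" "fm_basis R p c \<in> carrier R"
      by (simp_all add: fm_basis_closed)
    with r p q show "?lhs c = ?rhs c"
      unfolding leibniz_def fm_add_def fm_smult_def fm_neg_def by algebra
  qed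
  ultimately show ?thesis by simp
qed

lemma fm_basis_mult_mem_kaehler_mod_rels:
  assumes "p \<in> carrier R" and "q \<in> carrier R"
    and "fm_smult R p (fm_basis R q) \<in> kaehler_mod_rels R J"
    and "fm_smult R q (fm_basis R p) \<in> kaehler_mod_rels R J"
  shows "fm_basis R (p \<otimes>\<^bsub>R\<^esub> q) \<in> kaehler_mod_rels R J"
proof -
  have "fm_smult R \<one>\<^bsub>R\<^esub> (fm_basis R (p \<otimes>\<^bsub>R\<^esub> q)) \<in> kaehler_mod_rels R J"
    using assms by (intro smult_fm_basis_mult_mem_kaehler_mod_rels) simp_all
  moreover have "fm_smult R \<one>\<^bsub>R\<^esub> (fm_basis R (p \<otimes>\<^bsub>R\<^esub> q)) = fm_basis R (p \<otimes>\<^bsub>R\<^esub> q)"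
    by (simp add: fm_smult_def fm_basis_closed)
  ultimately show ?thesis by simp
qed

lemma d_zero_mod_mult:
  assumes "x \<in> J" and "x \<in> carrier R" and "c \<in> carrier R" and "d_zero_mod R J x"
  shows "d_zero_mod R J (x \<otimes>\<^bsub>R\<^esub> c)"
proof -
  have "fm_smult R c (fm_basis R x) \<in> kaehler_mod_rels R J"
    using assms(3,4) unfolding d_zero_mod_iff kaehler_mod_rels_def by (rule fm_span.smult)
  with assms(1-3) show ?thesis
    unfolding d_zero_mod_iff
    by (blast intro: fm_basis_mult_mem_kaehler_mod_rels smult_fm_basis_mem_kaehler_mod_rels)
qed

lemma d_zero_mod_cube:
  assumes y: "y \<in> carrier R" and yy: "y \<otimes>\<^bsub>R\<^esub> y \<in> J"
  shows "d_zero_mod R J (y [^]\<^bsub>R\<^esub> (3::nat))"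
proof -
  have "fm_smult R (y \<otimes>\<^bsub>R\<^esub> y) (fm_basis R y) \<in> kaehler_mod_rels R J"
    using smult_fm_basis_mem_kaehler_mod_rels[OF yy y] .
  moreover from this have "fm_smult R y (fm_basis R (y \<otimes>\<^bsub>R\<^esub> y)) \<in> kaehler_mod_rels R J"
    using y by (intro smult_fm_basis_mult_mem_kaehler_mod_rels)
  ultimately have "fm_basis R (y \<otimes>\<^bsub>R\<^esub> y \<otimes>\<^bsub>R\<^esub> y) \<in> kaehler_mod_rels R J"
    using y by (intro fm_basis_mult_mem_kaehler_mod_rels) simp_all
  then show ?thesis
    using y by (simp add: d_zero_mod_iff numeral_3_eq_3 R.nat_pow_Suc2 R.m_assoc)
qed

end

lemma ring_hom_Units:
  assumes h: "h \<in> ring_hom R S" and u: "u \<in> Units R"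
  shows "h u \<in> Units S"
proof -
  obtain v where v: "v \<in> carrier R" "v \<otimes>\<^bsub>R\<^esub> u = \<one>\<^bsub>R\<^esub>" "u \<otimes>\<^bsub>R\<^esub> v = \<one>\<^bsub>R\<^esub>" and "u \<in> carrier R"
    using u unfolding Units_def by auto
  then have "h v \<otimes>\<^bsub>S\<^esub> h u = \<one>\<^bsub>S\<^esub>" "h u \<otimes>\<^bsub>S\<^esub> h v = \<one>\<^bsub>S\<^esub>"
    using ring_hom_mult[OF h] ring_hom_one[OF h] by metis+
  with \<open>u \<in> carrier R\<close> v show ?thesis
    unfolding Units_def using ring_hom_closed[OF h] by blast
qed

lemma one_add_one_Units_of_char_0:
  assumes "field K" and "\<forall>n::nat. n > 0 \<longrightarrow> add_pow K n \<one>\<^bsub>K\<^esub> \<noteq> \<zero>\<^bsub>K\<^esub>" and "h \<in> ring_hom K S"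
  shows "\<one>\<^bsub>S\<^esub> \<oplus>\<^bsub>S\<^esub> \<one>\<^bsub>S\<^esub> \<in> Units S"
proof -
  interpret K: field K by fact
  have "\<one>\<^bsub>K\<^esub> \<oplus>\<^bsub>K\<^esub> \<one>\<^bsub>K\<^esub> \<in> Units K"
    using assms(2)[rule_format, of 2] by (simp add: K.field_Units add_pow_def numeral_2_eq_2)
  moreover have "h (\<one>\<^bsub>K\<^esub> \<oplus>\<^bsub>K\<^esub> \<one>\<^bsub>K\<^esub>) = \<one>\<^bsub>S\<^esub> \<oplus>\<^bsub>S\<^esub> \<one>\<^bsub>S\<^esub>"
    by (simp add: ring_hom_add[OF assms(3)] ring_hom_one[OF assms(3)])
  ultimately show ?thesis
    using ring_hom_Units[OF assms(3)] by metis
qed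

lemma flat_units_denominator_Units:
  assumes "cring A" and "cring S" and "phi \<in> ring_hom A S" and "a \<in> flat_units A"
  shows "phi a [^]\<^bsub>S\<^esub> (2::nat) \<otimes>\<^bsub>S\<^esub> (phi a \<ominus>\<^bsub>S\<^esub> \<one>\<^bsub>S\<^esub>) [^]\<^bsub>S\<^esub> (2::nat) \<in> Units S"
proof -
  interpret A: cring A by fact
  interpret S: cring S by fact
  interpret phi: ring_hom_ring A S phi
    by (rule ring_hom_ringI2[OF A.ring_axioms S.ring_axioms assms(3)])
  have a: "a \<in> Units A" and a1: "\<one>\<^bsub>A\<^esub> \<ominus>\<^bsub>A\<^esub> a \<in> Units A"
    using assms(4) by (auto simp: flat_units_def)
  have "a \<ominus>\<^bsub>A\<^esub> \<one>\<^bsub>A\<^esub> = \<ominus>\<^bsub>A\<^esub> \<one>\<^bsub>A\<^esub> \<otimes>\<^bsub>A\<^esub> (\<one>\<^bsub>A\<^esub> \<ominus>\<^bsub>A\<^esub> a)"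
    using A.Units_closed[OF a] by algebra
  then have "a \<ominus>\<^bsub>A\<^esub> \<one>\<^bsub>A\<^esub> \<in> Units A"
    using a1 A.Units_minus_one_closed by simp
  with a have "a [^]\<^bsub>A\<^esub> (2::nat) \<otimes>\<^bsub>A\<^esub> (a \<ominus>\<^bsub>A\<^esub> \<one>\<^bsub>A\<^esub>) [^]\<^bsub>A\<^esub> (2::nat) \<in> Units A"
    by (intro A.Units_m_closed A.Units_pow_closed)
  from ring_hom_Units[OF assms(3) this] show ?thesis
    using A.Units_closed[OF a] by (simp add: phi.hom_nat_pow A.minus_eq S.minus_eq)
qed

lemma minus_splitting_mem:
  assumes "ideal I A" and "tau \<in> ring_hom (A Quot I) A"
    and "\<forall>u\<in>carrier (A Quot I). I +>\<^bsub>A\<^esub> tau u = u" and "a \<in> carrier A"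
  shows "a \<ominus>\<^bsub>A\<^esub> tau (I +>\<^bsub>A\<^esub> a) \<in> I"
proof -
  interpret I: ideal I A by fact
  have "I +>\<^bsub>A\<^esub> a \<in> carrier (A Quot I)"
    using ring_hom_closed[OF I.rcos_ring_hom assms(4)] .
  then have "I +>\<^bsub>A\<^esub> tau (I +>\<^bsub>A\<^esub> a) = I +>\<^bsub>A\<^esub> a" and "tau (I +>\<^bsub>A\<^esub> a) \<in> carrier A"
    using assms(3) ring_hom_closed[OF assms(2)] by auto
  then show ?thesis
    using assms(4) by (metis I.a_rcos_self I.a_rcos_module_minus I.ring_axioms)
qed

context
  fixes R :: "'c ring" and J :: "'c set"
  assumes cring_R: "cring R" and ideal_J: "ideal J R"
begin

interpretation R: cring R by (rule cring_R)
interpretation J: ideal J R by (rule ideal_J)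

lemma cube_mult_mem_d_zero_mod:
  assumes y: "y \<in> carrier R" and yy: "y \<otimes>\<^bsub>R\<^esub> y \<in> J" and c: "c \<in> carrier R"
  shows "y [^]\<^bsub>R\<^esub> (3::nat) \<otimes>\<^bsub>R\<^esub> c \<in> J" and "d_zero_mod R J (y [^]\<^bsub>R\<^esub> (3::nat) \<otimes>\<^bsub>R\<^esub> c)"
proof -
  have "y [^]\<^bsub>R\<^esub> (3::nat) \<in> J"
    using J.I_r_closed[OF yy y] by (simp add: numeral_3_eq_3 R.nat_pow_Suc2 R.m_assoc y)
  then show "y [^]\<^bsub>R\<^esub> (3::nat) \<otimes>\<^bsub>R\<^esub> c \<in> J" and "d_zero_mod R J (y [^]\<^bsub>R\<^esub> (3::nat) \<otimes>\<^bsub>R\<^esub> c)"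
    using J.I_r_closed c y d_zero_mod_cube[OF cring_R y yy] by (auto intro: d_zero_mod_mult[OF cring_R])
qed

lemma cube_mult_diff_mem_ideal_prod:
  assumes y1: "y1 \<in> carrier R" and y2: "y2 \<in> carrier R" and c: "c \<in> carrier R"
    and "y1 \<ominus>\<^bsub>R\<^esub> y2 \<in> J" and "y1 \<otimes>\<^bsub>R\<^esub> y1 \<in> J" and "y1 \<otimes>\<^bsub>R\<^esub> y2 \<in> J" and "y2 \<otimes>\<^bsub>R\<^esub> y2 \<in> J"
  shows "y1 [^]\<^bsub>R\<^esub> (3::nat) \<otimes>\<^bsub>R\<^esub> c \<ominus>\<^bsub>R\<^esub> y2 [^]\<^bsub>R\<^esub> (3::nat) \<otimes>\<^bsub>R\<^esub> c \<in> J \<cdot>\<^bsub>R\<^esub> J"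
proof -
  have "(y1 \<otimes>\<^bsub>R\<^esub> y1 \<oplus>\<^bsub>R\<^esub> y1 \<otimes>\<^bsub>R\<^esub> y2 \<oplus>\<^bsub>R\<^esub> y2 \<otimes>\<^bsub>R\<^esub> y2) \<otimes>\<^bsub>R\<^esub> c \<in> J"
    using assms(5-7) c by (blast intro: J.I_r_closed J.a_closed)
  with assms(4) have "(y1 \<ominus>\<^bsub>R\<^esub> y2) \<otimes>\<^bsub>R\<^esub> ((y1 \<otimes>\<^bsub>R\<^esub> y1 \<oplus>\<^bsub>R\<^esub> y1 \<otimes>\<^bsub>R\<^esub> y2 \<oplus>\<^bsub>R\<^esub> y2 \<otimes>\<^bsub>R\<^esub> y2) \<otimes>\<^bsub>R\<^esub> c) \<in> J \<cdot>\<^bsub>R\<^esub> J"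
    by (rule ideal_prod.prod)
  moreover have "(y1 \<ominus>\<^bsub>R\<^esub> y2) \<otimes>\<^bsub>R\<^esub> ((y1 \<otimes>\<^bsub>R\<^esub> y1 \<oplus>\<^bsub>R\<^esub> y1 \<otimes>\<^bsub>R\<^esub> y2 \<oplus>\<^bsub>R\<^esub> y2 \<otimes>\<^bsub>R\<^esub> y2) \<otimes>\<^bsub>R\<^esub> c)
      = y1 [^]\<^bsub>R\<^esub> (3::nat) \<otimes>\<^bsub>R\<^esub> c \<ominus>\<^bsub>R\<^esub> y2 [^]\<^bsub>R\<^esub> (3::nat) \<otimes>\<^bsub>R\<^esub> c"
    using y1 y2 c by (simp add: numeral_3_eq_3) algebra
  ultimately show ?thesis by simp
qed

end

lemma square_zero_lift_cube:
  assumes "cring R" and "cring A" and h: "h \<in> ring_hom R A"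
    and u: "u \<in> carrier R" and c: "c \<in> carrier R" and "a \<in> carrier A"
    and "(a \<ominus>\<^bsub>A\<^esub> h u) \<otimes>\<^bsub>A\<^esub> (a \<ominus>\<^bsub>A\<^esub> h u) = \<zero>\<^bsub>A\<^esub>"
  defines "J \<equiv> {x \<in> carrier R. h x = \<zero>\<^bsub>A\<^esub>}"
  shows "\<forall>t1\<in>carrier R. \<forall>t2\<in>carrier R. h t1 = a \<longrightarrow> h t2 = a \<longrightarrow>
           (t1 \<ominus>\<^bsub>R\<^esub> u) [^]\<^bsub>R\<^esub> (3::nat) \<otimes>\<^bsub>R\<^esub> c \<ominus>\<^bsub>R\<^esub> (t2 \<ominus>\<^bsub>R\<^esub> u) [^]\<^bsub>R\<^esub> (3::nat) \<otimes>\<^bsub>R\<^esub> c \<in> J \<cdot>\<^bsub>R\<^esub> J"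
    and "\<forall>t\<in>carrier R. h t = a \<longrightarrow>
           (t \<ominus>\<^bsub>R\<^esub> u) [^]\<^bsub>R\<^esub> (3::nat) \<otimes>\<^bsub>R\<^esub> c \<in> J \<and> d_zero_mod R J ((t \<ominus>\<^bsub>R\<^esub> u) [^]\<^bsub>R\<^esub> (3::nat) \<otimes>\<^bsub>R\<^esub> c)"
proof -
  interpret R: cring R by fact
  interpret A: cring A by fact
  interpret h: ring_hom_ring R A h
    by (rule ring_hom_ringI2[OF R.ring_axioms A.ring_axioms h])
  have "J = a_kernel R A h"
    unfolding J_def a_kernel_def' by simp
  then have ideal_J: "ideal J R"
    using h.kernel_is_ideal by simp
  have sq: "(t \<ominus>\<^bsub>R\<^esub> u) \<otimes>\<^bsub>R\<^esub> (s \<ominus>\<^bsub>R\<^esub> u) \<in> J"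
    if "t \<in> carrier R" "h t = a" "s \<in> carrier R" "h s = a" for t s
    using that u assms(7) by (simp add: J_def R.minus_eq A.minus_eq)
  have diff: "(t \<ominus>\<^bsub>R\<^esub> u) \<ominus>\<^bsub>R\<^esub> (s \<ominus>\<^bsub>R\<^esub> u) \<in> J"
    if "t \<in> carrier R" "h t = a" "s \<in> carrier R" "h s = a" for t s
    using that u assms(6) by (simp add: J_def R.minus_eq A.minus_eq A.r_neg)
  show "\<forall>t1\<in>carrier R. \<forall>t2\<in>carrier R. h t1 = a \<longrightarrow> h t2 = a \<longrightarrow>
           (t1 \<ominus>\<^bsub>R\<^esub> u) [^]\<^bsub>R\<^esub> (3::nat) \<otimes>\<^bsub>R\<^esub> c \<ominus>\<^bsub>R\<^esub> (t2 \<ominus>\<^bsub>R\<^esub> u) [^]\<^bsub>R\<^esub> (3::nat) \<otimes>\<^bsub>R\<^esub> c \<in> J \<cdot>\<^bsub>R\<^esub> J"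
  proof (intro ballI impI)
    fix t1 t2 assume "t1 \<in> carrier R" "t2 \<in> carrier R" "h t1 = a" "h t2 = a"
    with u c sq diff show "(t1 \<ominus>\<^bsub>R\<^esub> u) [^]\<^bsub>R\<^esub> (3::nat) \<otimes>\<^bsub>R\<^esub> c \<ominus>\<^bsub>R\<^esub> (t2 \<ominus>\<^bsub>R\<^esub> u) [^]\<^bsub>R\<^esub> (3::nat) \<otimes>\<^bsub>R\<^esub> c \<in> J \<cdot>\<^bsub>R\<^esub> J"
      by (intro cube_mult_diff_mem_ideal_prod[OF R.cring_axioms ideal_J]) simp_all
  qed
  show "\<forall>t\<in>carrier R. h t = a \<longrightarrow>
           (t \<ominus>\<^bsub>R\<^esub> u) [^]\<^bsub>R\<^esub> (3::nat) \<otimes>\<^bsub>R\<^esub> c \<in> J \<and> d_zero_mod R J ((t \<ominus>\<^bsub>R\<^esub> u) [^]\<^bsub>R\<^esub> (3::nat) \<otimes>\<^bsub>R\<^esub> c)"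
    using u c sq by (simp add: cube_mult_mem_d_zero_mod[OF R.cring_axioms ideal_J])
qed

theorem proposition3p2:
  fixes K :: "'k ring" and A :: "'a ring" and B :: "'b ring"
    and iA :: "'k \<Rightarrow> 'a" and I :: "'a set"
    and tau :: "'a set \<Rightarrow> 'a" and sigma :: "'a set \<Rightarrow> 'b" and pr :: "'b \<Rightarrow> 'a"
    and a :: 'a
  assumes field_K: "field K"
    and char0: "\<forall>n::nat. n > 0 \<longrightarrow> add_pow K n \<one>\<^bsub>K\<^esub> \<noteq> \<zero>\<^bsub>K\<^esub>"
    and cring_A: "cring A" and iA_hom: "iA \<in> ring_hom K A"
    and ideal_I: "ideal I A" and I_sq: "\<forall>x\<in>I. \<forall>y\<in>I. x \<otimes>\<^bsub>A\<^esub> y = \<zero>\<^bsub>A\<^esub>"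
    and A_smooth: "smooth_alg K (A Quot I) (\<lambda>c. I +>\<^bsub>A\<^esub> iA c)"
    and tau_hom: "tau \<in> ring_hom (A Quot I) A"
    and tau_k: "\<forall>c\<in>carrier K. tau (I +>\<^bsub>A\<^esub> iA c) = iA c"
    and tau_split: "\<forall>u\<in>carrier (A Quot I). I +>\<^bsub>A\<^esub> tau u = u"
    and cring_B: "cring B" and sigma_hom: "sigma \<in> ring_hom (A Quot I) B"
    and B_smooth: "smooth_alg (A Quot I) B sigma"
    and pi_hom: "pr \<in> ring_hom B A" and pi_surj: "pr ` carrier B = carrier A"
    and pi_alg: "\<forall>u\<in>carrier (A Quot I). pr (sigma u) = tau u"
    and a_flat: "a \<in> flat_units A"
  defines "Kb \<equiv> {b \<in> carrier B. pr b = \<zero>\<^bsub>A\<^esub>}"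
  defines "Bh \<equiv> completion B Kb"
  defines "Jh \<equiv> {f \<in> carrier Bh. compl_proj pr f = \<zero>\<^bsub>A\<^esub>}"
  defines "ah \<equiv> compl_map B Kb (sigma (I +>\<^bsub>A\<^esub> a))"
  defines "xv \<equiv> (\<lambda>t. \<ominus>\<^bsub>Bh\<^esub> (m_inv Bh (\<one>\<^bsub>Bh\<^esub> \<oplus>\<^bsub>Bh\<^esub> \<one>\<^bsub>Bh\<^esub>)
                     \<otimes>\<^bsub>Bh\<^esub> (t \<ominus>\<^bsub>Bh\<^esub> ah) [^]\<^bsub>Bh\<^esub> (3::nat)
                     \<otimes>\<^bsub>Bh\<^esub> m_inv Bh (ah [^]\<^bsub>Bh\<^esub> (2::nat)
                        \<otimes>\<^bsub>Bh\<^esub> (ah \<ominus>\<^bsub>Bh\<^esub> \<one>\<^bsub>Bh\<^esub>) [^]\<^bsub>Bh\<^esub> (2::nat))))"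
  shows "(\<forall>t1\<in>carrier Bh. \<forall>t2\<in>carrier Bh. compl_proj pr t1 = a \<longrightarrow> compl_proj pr t2 = a \<longrightarrow>
            xv t1 \<ominus>\<^bsub>Bh\<^esub> xv t2 \<in> Jh \<cdot>\<^bsub>Bh\<^esub> Jh)
       \<and> (\<forall>t\<in>carrier Bh. compl_proj pr t = a \<longrightarrow> xv t \<in> Jh \<and> d_zero_mod Bh Jh (xv t))"
proof -
  interpret A: cring A by (rule cring_A)
  have "Kb = a_kernel B A pr"
    unfolding Kb_def a_kernel_def' by simp
  note Bh = completion_along_kernel[OF cring_B A.ring_axioms pi_hom this, folded Bh_def]
  interpret Bh: cring Bh by (rule Bh(1))
  define phi where "phi = compl_map B Kb \<circ> sigma \<circ> (+>\<^bsub>A\<^esub>) I"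
  have phi: "phi \<in> ring_hom A Bh"
    unfolding phi_def by (rule ring_hom_trans[OF ideal.rcos_ring_hom[OF ideal_I] ring_hom_trans[OF sigma_hom Bh(2)]])
  have a: "a \<in> carrier A"
    using a_flat by (auto simp: flat_units_def)
  have I_a: "I +>\<^bsub>A\<^esub> a \<in> carrier (A Quot I)"
    by (rule ring_hom_closed[OF ideal.rcos_ring_hom[OF ideal_I] a])
  have ah: "ah = phi a" "ah \<in> carrier Bh"
    using ring_hom_closed[OF phi a] by (simp_all add: ah_def phi_def)
  have proj_ah: "compl_proj pr ah = tau (I +>\<^bsub>A\<^esub> a)"
    unfolding ah_def using Bh(4) ring_hom_closed[OF sigma_hom I_a] pi_alg I_a by simp
  have inv_closed: "m_inv Bh (\<one>\<^bsub>Bh\<^esub> \<oplus>\<^bsub>Bh\<^esub> \<one>\<^bsub>Bh\<^esub>) \<in> carrier Bh"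
      "m_inv Bh (ah [^]\<^bsub>Bh\<^esub> (2::nat) \<otimes>\<^bsub>Bh\<^esub> (ah \<ominus>\<^bsub>Bh\<^esub> \<one>\<^bsub>Bh\<^esub>) [^]\<^bsub>Bh\<^esub> (2::nat)) \<in> carrier Bh"
    using one_add_one_Units_of_char_0[OF field_K char0 ring_hom_trans[OF iA_hom phi]]
      flat_units_denominator_Units[OF cring_A Bh.cring_axioms phi a_flat]
    unfolding ah(1) by simp_all
  define C where "C = \<ominus>\<^bsub>Bh\<^esub> (m_inv Bh (\<one>\<^bsub>Bh\<^esub> \<oplus>\<^bsub>Bh\<^esub> \<one>\<^bsub>Bh\<^esub>) \<otimes>\<^bsub>Bh\<^esub>
    m_inv Bh (ah [^]\<^bsub>Bh\<^esub> (2::nat) \<otimes>\<^bsub>Bh\<^esub> (ah \<ominus>\<^bsub>Bh\<^esub> \<one>\<^bsub>Bh\<^esub>) [^]\<^bsub>Bh\<^esub> (2::nat)))"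
  have C: "C \<in> carrier Bh"
    unfolding C_def using inv_closed by simp
  have xv_eq: "xv t = (t \<ominus>\<^bsub>Bh\<^esub> ah) [^]\<^bsub>Bh\<^esub> (3::nat) \<otimes>\<^bsub>Bh\<^esub> C" if "t \<in> carrier Bh" for t
    unfolding xv_def C_def using that ah(2) inv_closed by (simp add: Bh.r_minus Bh.m_ac)
  have square_zero: "(a \<ominus>\<^bsub>A\<^esub> compl_proj pr ah) \<otimes>\<^bsub>A\<^esub> (a \<ominus>\<^bsub>A\<^esub> compl_proj pr ah) = \<zero>\<^bsub>A\<^esub>"
    unfolding proj_ah using minus_splitting_mem[OF ideal_I tau_hom tau_split a] I_sq by blast
  show ?thesis
    using square_zero_lift_cube[OF Bh.cring_axioms cring_A Bh(3), OF ah(2) C a square_zero]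
    unfolding Jh_def[symmetric] by (simp add: xv_eq)
qed

end
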